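(* For every term $s$ and every program $P$, $\varphi(\gamma s++\mathsf{ret}::P)=(\gamma s,P)$ (in particular it is defined).
   Context: Terms (de Bruijn): $s::=n\mid st\mid\lambda s$, $n\in\mathbb N$. Commands are $\mathsf{ret}$, $\mathsf{var}\,n$, $\mathsf{lam}$, $\mathsf{app}$; programs are finite lists of commands ($++$ concatenation, $::$ cons, $[]$ empty). Compilation: $\gamma n=[\mathsf{var}\,n]$, $\gamma(st)=\gamma s++\gamma t++[\mathsf{app}]$, $\gamma(\lambda s)=\mathsf{lam}::\gamma s++[\mathsf{ret}]$. The partial function $\varphi$ on programs is $\varphi P:=\varphi_{0,[]}P$, where $\varphi_{0,Q}(\mathsf{ret}::P)=(Q,P)$; $\varphi_{k+1,Q}(\mathsf{ret}::P)=\varphi_{k,Q++[\mathsf{ret}]}P$; $\varphi_{k,Q}(\mathsf{lam}::P)=\varphi_{k+1,Q++[\mathsf{lam}]}P$; $\varphi_{k,Q}(c::P)=\varphi_{k,Q++[c]}P$ if $c=\mathsf{var}\,n$ or $c=\mathsf{app}$; and $\varphi_{k,Q}[]$ is undefined. *)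

theory Defs
  imports Main
begin

datatype tm = Var nat | App tm tm | Lam tm

datatype cmd = Ret | VarC nat | LamC | AppC

type_synonym prog = "cmd list"

fun gamma :: "tm \<Rightarrow> prog" where
  "gamma (Var n) = [VarC n]"
| "gamma (App s t) = gamma s @ gamma t @ [AppC]"
| "gamma (Lam s) = LamC # gamma s @ [Ret]"

fun phi_aux :: "nat \<Rightarrow> prog \<Rightarrow> prog \<Rightarrow> (prog \<times> prog) option" where
  "phi_aux 0 Q (Ret # P) = Some (Q, P)"
| "phi_aux (Suc k) Q (Ret # P) = phi_aux k (Q @ [Ret]) P"
| "phi_aux k Q (LamC # P) = phi_aux (Suc k) (Q @ [LamC]) P"
| "phi_aux k Q (VarC n # P) = phi_aux k (Q @ [VarC n]) P"
| "phi_aux k Q (AppC # P) = phi_aux k (Q @ [AppC]) P"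
| "phi_aux k Q [] = None"

definition phi :: "prog \<Rightarrow> (prog \<times> prog) option" where
  "phi P = phi_aux 0 [] P"

end

theory Submission
  imports Defs
begin

text \<open>A compiled term is balanced: every \<open>Ret\<close> it contains closes a \<open>LamC\<close> of the same
  term, so the scanner moves it into the accumulator and returns to the same nesting depth.\<close>

lemma phi_aux_gamma_append:
  "phi_aux k Q (gamma s @ P) = phi_aux k (Q @ gamma s) P"
  by (induction s arbitrary: k Q P) auto

theorem lemma9:
  shows "phi (gamma s @ Ret # P) = Some (gamma s, P)"
  by (simp add: phi_def phi_aux_gamma_append)

end
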